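(* Let $\hat q,\hat p$ be $n\times n$ parametric matrices and let $M$ be an invertible $n\times n$ $(\hat q,\hat p)$-Manin matrix over $\mathfrak R$. Let $1\le m\le n$, let $I=(i_1<\dots<i_m)$ be an increasing multi-index and $J=(j_1,\dots,j_m)$ a multi-index with distinct entries, both with entries in $\{1,\dots,n\}$. Then $$\sum_K\varepsilon(\hat p,K^{\tau})\,\mathrm{cdet}_{\hat q}(M_{IK})\,\mathrm{cdet}_{\hat p'}((M^{-1})_{KJ})=\varepsilon(\hat q,J^{\tau})\,\delta_{I,J^{or}},$$ where the sum is over all increasing multi-indices $K=(k_1<\dots<k_m)$ with entries in $\{1,\dots,n\}$, and $\hat p'=(p'_{ij})$ with $p'_{ij}=p_{ij}^{-1}$. In particular, for $m=n$, $$\mathrm{cdet}_{\hat q}(M)\,\mathrm{cdet}_{\hat p'}(M^{-1})=\varepsilon(\hat p,\tau)^{-1}\varepsilon(\hat q,\tau),$$ where $\tau=(n,n-1,\dots,1)$.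
   Context: $\mathfrak R$ is an associative unital algebra over $\mathbb C$. A parametric $n\times n$ matrix is a matrix $\hat q=(q_{ij})$ of nonzero complex numbers with $q_{ij}q_{ji}=1$, $q_{ii}=1$. An $n\times n$ matrix $M$ over $\mathfrak R$ is a $(\hat q,\hat p)$-Manin matrix if $M_{ik}M_{jk}=q_{ji}M_{jk}M_{ik}$ for $i<j$ and all $k$, and $M_{ik}M_{jl}-q_{ji}p_{kl}M_{jl}M_{ik}+p_{kl}M_{il}M_{jk}-q_{ji}M_{jk}M_{il}=0$ for $i<j$, $k<l$. For a multi-index $I=(i_1,\dots,i_r)$: $I^{\tau}=(i_r,\dots,i_1)$ is its reverse; $I^{or}$ is its nondecreasing rearrangement; $\varepsilon(\hat q,I)=0$ if two entries coincide, otherwise $\varepsilon(\hat q,I)=\prod_{s<t,\ i_s>i_t}(-q_{i_si_t})$. For increasing $I=(i_1<\dots<i_r)$ and $\sigma\in S_r$, $\varepsilon(\hat q,I,\sigma)=\prod_{s<t,\ \sigma(s)>\sigma(t)}(-q_{i_{\sigma(s)}i_{\sigma(t)}})$. For any matrix $X$, increasing $I$ and any multi-index $J=(j_1,\dots,j_r)$, $\mathrm{cdet}_{\hat q}(X_{IJ})=\sum_{\sigma\in S_r}\varepsilon(\hat q,I,\sigma)X_{i_{\sigma(1)},j_1}\cdots X_{i_{\sigma(r)},j_r}$ (same formula with any parametric matrix in place of $\hat q$); $\mathrm{cdet}_{\hat q}(X)$ is the case $I=J=(1,\dots,n)$. $\delta_{I,J^{or}}$ is $1$ if $I=J^{or}$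 and $0$ otherwise. *)

theory Defs
  imports Complex_Main "HOL-Combinatorics.Permutations"
begin

(* An associative unital C-algebra R is modelled as a ring 'a :: ring_1 together with
   the structure map phi : C -> R, a unital ring homomorphism with central image. *)
definition calg :: "(complex \<Rightarrow> 'a::ring_1) \<Rightarrow> bool" where
  "calg phi \<longleftrightarrow> phi 1 = 1 \<and> (\<forall>a b. phi (a + b) = phi a + phi b)
     \<and> (\<forall>a b. phi (a * b) = phi a * phi b) \<and> (\<forall>a x. phi a * x = x * phi a)"

(* n x n matrices are functions indexed by {1..n} x {1..n} *)
definition param_matrix :: "nat \<Rightarrow> (nat \<Rightarrow> nat \<Rightarrow> complex) \<Rightarrow> bool" where
  "param_matrix n q \<longleftrightarrow> (\<forall>i\<in>{1..n}. \<forall>j\<in>{1..n}. q i j \<noteq> 0 \<and> q i j * q j i = 1) \<and>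
     (\<forall>i\<in>{1..n}. q i i = 1)"

definition manin :: "(complex \<Rightarrow> 'a::ring_1) \<Rightarrow> nat \<Rightarrow> (nat \<Rightarrow> nat \<Rightarrow> complex) \<Rightarrow>
    (nat \<Rightarrow> nat \<Rightarrow> complex) \<Rightarrow> (nat \<Rightarrow> nat \<Rightarrow> 'a) \<Rightarrow> bool" where
  "manin phi n q p M \<longleftrightarrow>
     (\<forall>i\<in>{1..n}. \<forall>j\<in>{1..n}. \<forall>k\<in>{1..n}. i < j \<longrightarrow>
        M i k * M j k = phi (q j i) * M j k * M i k) \<and>
     (\<forall>i\<in>{1..n}. \<forall>j\<in>{1..n}. \<forall>k\<in>{1..n}. \<forall>l\<in>{1..n}. i < j \<longrightarrow> k < l \<longrightarrow>
        M i k * M j l - phi (q j i * p k l) * M j l * M i k + phi (p k l) * M i l * M j k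
          - phi (q j i) * M j k * M i l = 0)"

definition matmul :: "nat \<Rightarrow> (nat \<Rightarrow> nat \<Rightarrow> 'a::ring_1) \<Rightarrow> (nat \<Rightarrow> nat \<Rightarrow> 'a) \<Rightarrow> nat \<Rightarrow> nat \<Rightarrow> 'a" where
  "matmul n A B i j = (\<Sum>k=1..n. A i k * B k j)"

definition is_inverse :: "nat \<Rightarrow> (nat \<Rightarrow> nat \<Rightarrow> 'a::ring_1) \<Rightarrow> (nat \<Rightarrow> nat \<Rightarrow> 'a) \<Rightarrow> bool" where
  "is_inverse n M N \<longleftrightarrow> (\<forall>i\<in>{1..n}. \<forall>j\<in>{1..n}.
      matmul n M N i j = (if i = j then 1 else 0) \<and> matmul n N M i j = (if i = j then 1 else 0))"

(* multi-indices are lists; positions are 0-based *)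
definition eps :: "(nat \<Rightarrow> nat \<Rightarrow> complex) \<Rightarrow> nat list \<Rightarrow> complex" where
  "eps q I = (if distinct I then
      (\<Prod>(s,t)\<in>{(s,t). s < t \<and> t < length I \<and> I!s > I!t}. - q (I!s) (I!t)) else 0)"

definition eps_perm :: "(nat \<Rightarrow> nat \<Rightarrow> complex) \<Rightarrow> nat list \<Rightarrow> (nat \<Rightarrow> nat) \<Rightarrow> complex" where
  "eps_perm q I \<sigma> =
      (\<Prod>(s,t)\<in>{(s,t). s < t \<and> t < length I \<and> \<sigma> s > \<sigma> t}. - q (I!(\<sigma> s)) (I!(\<sigma> t)))"

(* column determinant cdet_q(X_{IJ}) for increasing I, length J = length I *)
definition cdet :: "(complex \<Rightarrow> 'a::ring_1) \<Rightarrow> (nat \<Rightarrow> nat \<Rightarrow> complex) \<Rightarrow> (nat \<Rightarrow> nat \<Rightarrow> 'a) \<Rightarrow>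
    nat list \<Rightarrow> nat list \<Rightarrow> 'a" where
  "cdet phi q X I J = (\<Sum>\<sigma> | \<sigma> permutes {0..<length I}.
      phi (eps_perm q I \<sigma>) * prod_list (map (\<lambda>s. X (I!(\<sigma> s)) (J!s)) [0..<length I]))"

end

theory Submission
  imports Defs
begin

text \<open>
  Write the column determinant as a sum over the rearrangements \<open>R\<close> of the row list \<open>I\<close>,
  \<open>cdet_q(X_{I,L}) = \<Sum>_R \<epsilon>(q,R) X(r_1,l_1) \<cdots> X(r_m,l_m)\<close>; this makes sense for every
  column list \<open>L\<close>. Pairing each \<open>R\<close> with its swap at two adjacent positions turns the Manin
  relations into the statement that swapping two adjacent distinct columns multiplies the sum by
  \<open>-p_{kl}\<close>, and that two equal adjacent columns kill it. Sorting the columns by adjacent swaps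
  thus gives \<open>cdet_q(M_{I,L}) = \<epsilon>(p,L) cdet_q(M_{I,sort L})\<close>. Together with
  \<open>\<epsilon>(p,L\<^sup>\<tau>) = \<epsilon>(p,(sort L)\<^sup>\<tau>) \<epsilon>(p',L)\<close>, the \<open>K\<close>-th summand of the left-hand side becomes
  \<open>\<Sum>_L cdet_q(M_{I,L\<^sup>\<tau>}) N(l_1,j_1) \<cdots> N(l_m,j_m)\<close> with \<open>N = M\<^sup>-\<^sup>1\<close> and \<open>L\<close> ranging over the
  rearrangements of \<open>K\<close>, so the whole sum runs over all \<open>L \<in> {1..n}\<^sup>m\<close> (terms with repeated
  entries vanish). Expanding the remaining column determinant, \<open>M\<close> and \<open>N\<close> contract to
  Kronecker deltas and only \<open>R = J\<^sup>\<tau>\<close> survives. For \<open>m = n\<close> the only \<open>K\<close> is \<open>(1,\<dots>,n)\<close>,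
  and \<open>\<epsilon>(p,\<tau>) \<noteq> 0\<close>.
\<close>

lemma mult_diff_central_factor:
  fixes a b c e x y :: "'a::ring_1"
  assumes "\<And>z. c * z = z * c"
  shows "e * (a * x * b) + - (c * e) * (a * y * b) = e * (a * (x - c * y) * b)"
proof -
  have "c * e * (a * y * b) = e * (a * (c * y) * b)"
    by (metis assms mult.assoc)
  then show ?thesis by (simp add: algebra_simps)
qed

lemma mult_central_pull_out:
  fixes a b c e x :: "'a::ring_1"
  assumes "\<And>z. c * z = z * c"
  shows "e * (a * (c * x) * b) = c * (e * (a * x * b))"
proof -
  have "e * (a * (c * x) * b) = e * (a * c) * x * b"
    by (simp add: mult.assoc)
  also have "e * (a * c) = c * (e * a)"
    using assms[of a, symmetric] assms[of e, symmetric] by (simp add: mult.assoc[symmetric])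
  finally show ?thesis
    by (simp add: mult.assoc)
qed

lemma calg_mult: "calg phi \<Longrightarrow> phi (a * b) = phi a * phi b"
  unfolding calg_def by blast

lemma calg_one: "calg phi \<Longrightarrow> phi 1 = 1"
  unfolding calg_def by blast

lemma calg_central: "calg phi \<Longrightarrow> phi a * x = x * phi a"
  unfolding calg_def by blast

lemma calg_zero:
  assumes "calg phi"
  shows "phi 0 = 0"
proof -
  have "phi (0 + 0) = phi 0 + phi 0"
    using assms unfolding calg_def by blast
  then show ?thesis by simp
qed

lemma calg_minus:
  assumes "calg phi"
  shows "phi (- a) = - phi a"
proof -
  have "phi (- a + a) = phi (- a) + phi a"
    using assms unfolding calg_def by blast
  then show ?thesis
    using calg_zero[OF assms] by (simp add: eq_neg_iff_add_eq_0)
qed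

lemma calg_mult_left_cancel:
  assumes phi: "calg phi" and "e \<noteq> 0" and "phi e * x = y"
  shows "x = phi (inverse e) * y"
proof -
  have "phi (inverse e) * y = phi (inverse e * e) * x"
    using assms(3) by (simp add: calg_mult[OF phi] mult.assoc)
  then show ?thesis
    using \<open>e \<noteq> 0\<close> by (simp add: calg_one[OF phi])
qed

lemma param_matrix_inverse:
  "param_matrix n p \<Longrightarrow> a \<in> {1..n} \<Longrightarrow> b \<in> {1..n} \<Longrightarrow> inverse (p a b) = p b a"
  unfolding param_matrix_def by (metis inverse_unique)

lemma param_matrix_minus_mult:
  "param_matrix n p \<Longrightarrow> a \<in> {1..n} \<Longrightarrow> b \<in> {1..n} \<Longrightarrow> (- p a b) * (- p b a) = 1"
  unfolding param_matrix_def by simp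

section \<open>Adjacent transpositions and inversions\<close>

abbreviation adj_transp :: "nat \<Rightarrow> nat \<Rightarrow> nat" where
  "adj_transp t \<equiv> Transposition.transpose t (Suc t)"

definition swap_adj :: "'b list \<Rightarrow> nat \<Rightarrow> 'b list" where
  "swap_adj L t = permute_list (adj_transp t) L"

lemma adj_transp_permutes: "Suc t < n \<Longrightarrow> adj_transp t permutes {..<n}"
  by (simp add: permutes_swap_id)

lemma length_swap_adj [simp]: "length (swap_adj L t) = length L"
  by (simp add: swap_adj_def)

lemma nth_swap_adj: "Suc t < length L \<Longrightarrow> i < length L \<Longrightarrow> swap_adj L t ! i = L ! adj_transp t i"
  by (simp add: swap_adj_def permute_list_nth adj_transp_permutes)

lemma nth_swap_adj_fst [simp]: "Suc t < length L \<Longrightarrow> swap_adj L t ! t = L ! Suc t"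
  by (simp add: nth_swap_adj)

lemma nth_swap_adj_snd [simp]: "Suc t < length L \<Longrightarrow> swap_adj L t ! Suc t = L ! t"
  by (simp add: nth_swap_adj)

lemma adj_transp_less_iff [simp]: "Suc t < n \<Longrightarrow> adj_transp t i < n \<longleftrightarrow> i < n"
  by (auto simp: transpose_def)

lemma swap_adj_swap_adj [simp]: "Suc t < length L \<Longrightarrow> swap_adj (swap_adj L t) t = L"
  by (rule nth_equalityI) (simp_all add: nth_swap_adj)

lemma mset_swap_adj [simp]: "Suc t < length L \<Longrightarrow> mset (swap_adj L t) = mset L"
  by (simp add: swap_adj_def adj_transp_permutes)

lemma set_swap_adj [simp]: "Suc t < length L \<Longrightarrow> set (swap_adj L t) = set L"
  by (metis mset_swap_adj set_mset_mset)

lemma distinct_swap_adj [simp]: "Suc t < length L \<Longrightarrow> distinct (swap_adj L t) = distinct L"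
  by (metis mset_swap_adj mset_eq_imp_distinct_iff)

lemma sort_swap_adj [simp]: "Suc t < length L \<Longrightarrow> sort (swap_adj L t) = sort L"
  by (rule properties_for_sort) simp_all

lemma take_swap_adj [simp]: "Suc t < length L \<Longrightarrow> take t (swap_adj L t) = take t L"
  by (rule nth_equalityI) (simp_all add: nth_swap_adj)

lemma drop_swap_adj [simp]:
  "Suc t < length L \<Longrightarrow> drop (Suc (Suc t)) (swap_adj L t) = drop (Suc (Suc t)) L"
  by (rule nth_equalityI) (simp_all add: nth_swap_adj)

lemma rev_swap_adj:
  "Suc t < length L \<Longrightarrow> rev (swap_adj L t) = swap_adj (rev L) (length L - 2 - t)"
  by (rule nth_equalityI)
    (auto simp: nth_swap_adj rev_nth transpose_def intro!: arg_cong[where f = "nth L"])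

definition inversions :: "nat list \<Rightarrow> (nat \<times> nat) set" where
  "inversions L = {(s, u). s < u \<and> u < length L \<and> L ! s > L ! u}"

lemma finite_inversions: "finite (inversions L)"
  by (rule finite_subset[of _ "{..<length L} \<times> {..<length L}"]) (auto simp: inversions_def)

lemma sorted_imp_inversions_empty: "sorted L \<Longrightarrow> inversions L = {}"
  by (auto simp: inversions_def sorted_iff_nth_mono leD)

lemma eps_eq_prod_inversions:
  "eps q L = (if distinct L then \<Prod>(s, u)\<in>inversions L. - q (L ! s) (L ! u) else 0)"
  by (simp add: eps_def inversions_def)

lemma eps_sorted: "sorted L \<Longrightarrow> distinct L \<Longrightarrow> eps q L = 1"
  by (simp add: eps_eq_prod_inversions sorted_imp_inversions_empty)

lemma eps_nonzero:
  assumes "param_matrix n p" and "distinct L" and "set L \<subseteq> {1..n}"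
  shows "eps p L \<noteq> 0"
proof -
  have "- p (L ! s) (L ! u) \<noteq> 0" if "(s, u) \<in> inversions L" for s u
  proof -
    have "L ! s \<in> set L" "L ! u \<in> set L"
      using that by (auto simp: inversions_def)
    then have "L ! s \<in> {1..n}" "L ! u \<in> {1..n}"
      using assms(3) by blast+
    then show ?thesis using assms(1) by (simp add: param_matrix_def)
  qed
  then show ?thesis
    using assms(2) by (auto simp: eps_eq_prod_inversions finite_inversions)
qed

lemma map_prod_adj_transp_image_iff:
  "(a, b) \<in> map_prod (adj_transp t) (adj_transp t) ` X \<longleftrightarrow> (adj_transp t a, adj_transp t b) \<in> X"
proof
  assume "(a, b) \<in> map_prod (adj_transp t) (adj_transp t) ` X"
  then show "(adj_transp t a, adj_transp t b) \<in> X" by auto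
next
  assume "(adj_transp t a, adj_transp t b) \<in> X"
  then show "(a, b) \<in> map_prod (adj_transp t) (adj_transp t) ` X"
    by (intro image_eqI[where x = "(adj_transp t a, adj_transp t b)"]) simp_all
qed

lemma inversions_swap_adj:
  assumes "Suc t < length L" and "L ! t > L ! Suc t"
  shows "inversions L =
    insert (t, Suc t) (map_prod (adj_transp t) (adj_transp t) ` inversions (swap_adj L t))"
proof -
  have "(a, b) \<in> inversions L \<longleftrightarrow>
      (a, b) = (t, Suc t) \<or> (adj_transp t a, adj_transp t b) \<in> inversions (swap_adj L t)" for a b
    using assms
    by (auto simp: inversions_def nth_swap_adj transpose_def split: if_splits)
  then show ?thesis
    by (auto simp: map_prod_adj_transp_image_iff)
qed

lemma adj_pair_notin_image_inversions:
  "(t, Suc t) \<notin> map_prod (adj_transp t) (adj_transp t) ` inversions L"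
  by (simp add: map_prod_adj_transp_image_iff inversions_def)

lemma card_inversions_swap_adj:
  assumes "Suc t < length L" and "L ! t > L ! Suc t"
  shows "card (inversions L) = Suc (card (inversions (swap_adj L t)))"
proof -
  have "inj (map_prod (adj_transp t) (adj_transp t))"
    by (simp add: prod.inj_map)
  then show ?thesis
    by (simp add: inversions_swap_adj[OF assms] adj_pair_notin_image_inversions
        finite_inversions card_image inj_on_subset)
qed

lemma eps_swap_adj_desc:
  assumes "Suc t < length L" and "L ! t > L ! Suc t"
  shows "eps q L = - q (L ! t) (L ! Suc t) * eps q (swap_adj L t)"
proof (cases "distinct L")
  case True
  let ?f = "map_prod (adj_transp t) (adj_transp t)"
  have "inj ?f"
    by (simp add: prod.inj_map)
  then have "(\<Prod>(s, u)\<in>?f ` inversions (swap_adj L t). - q (L ! s) (L ! u))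
      = (\<Prod>(s, u)\<in>inversions (swap_adj L t). - q (swap_adj L t ! s) (swap_adj L t ! u))"
    using assms(1)
    by (subst prod.reindex) (auto intro: inj_on_subset intro!: prod.cong simp: inversions_def nth_swap_adj)
  then show ?thesis
    using True assms
    by (simp add: eps_eq_prod_inversions inversions_swap_adj adj_pair_notin_image_inversions
        finite_inversions)
qed (use assms in \<open>simp add: eps_eq_prod_inversions\<close>)

lemma eps_swap_adj_asc:
  assumes "Suc t < length L" and "L ! t < L ! Suc t"
  shows "eps q (swap_adj L t) = - q (L ! Suc t) (L ! t) * eps q L"
  using eps_swap_adj_desc[of t "swap_adj L t" q] assms by simp

lemma eps_rev_swap_adj:
  assumes "Suc t < length L" and "L ! t > L ! Suc t"
  shows "eps q (rev (swap_adj L t)) = - q (L ! t) (L ! Suc t) * eps q (rev L)"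
proof -
  let ?t' = "length L - 2 - t"
  have "Suc ?t' < length (rev L)" "rev L ! ?t' = L ! Suc t" "rev L ! Suc ?t' = L ! t"
    using assms(1) by (simp_all add: rev_nth Suc_diff_Suc numeral_2_eq_2)
  then show ?thesis
    using eps_swap_adj_asc[of ?t' "rev L" q] assms by (simp add: rev_swap_adj)
qed

lemma sort_adj_induct [case_names sorted swap]:
  fixes L :: "nat list"
  assumes sorted: "\<And>L. sorted L \<Longrightarrow> P L"
    and swap: "\<And>L t. Suc t < length L \<Longrightarrow> L ! t > L ! Suc t \<Longrightarrow> P (swap_adj L t) \<Longrightarrow> P L"
  shows "P L"
proof (induction L rule: measure_induct_rule[of "\<lambda>L. card (inversions L)"])
  case (less L)
  show ?case
  proof (cases "\<exists>t. Suc t < length L \<and> L ! t > L ! Suc t")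
    case True
    then obtain t where "Suc t < length L" "L ! t > L ! Suc t" by blast
    then show ?thesis
      using swap less card_inversions_swap_adj by simp
  next
    case False
    then show ?thesis
      using sorted unfolding sorted_iff_nth_Suc by (meson not_le)
  qed
qed

lemma eps_rev_eq:
  assumes p: "param_matrix n p"
  shows "distinct L \<Longrightarrow> set L \<subseteq> {1..n} \<Longrightarrow>
    eps p (rev L) = eps p (rev (sort L)) * eps (\<lambda>i j. inverse (p i j)) L"
proof (induction L rule: sort_adj_induct)
  case (sorted L)
  then show ?case by (simp add: sorted_sort_id eps_sorted)
next
  case (swap L t)
  let ?a = "L ! t" and ?b = "L ! Suc t"
  have ab: "?a \<in> {1..n}" "?b \<in> {1..n}"
    using swap.prems(2) swap.hyps(1) by (meson nth_mem subsetD Suc_lessD)+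
  have "eps p (rev L) = (- p ?b ?a) * (- p ?a ?b) * eps p (rev L)"
    using param_matrix_minus_mult[OF p ab(2,1)] by simp
  also have "\<dots> = (- p ?b ?a) * eps p (rev (swap_adj L t))"
    using eps_rev_swap_adj[OF swap.hyps(1,2)] by (simp add: mult.assoc)
  also have "\<dots> = eps p (rev (sort L)) * eps (\<lambda>i j. inverse (p i j)) L"
    using swap eps_swap_adj_desc[OF swap.hyps(1,2), of "\<lambda>i j. inverse (p i j)"]
      param_matrix_inverse[OF p ab]
    by (simp add: mult_ac)
  finally show ?case .
qed

lemma sum_swap_adj_pairs:
  fixes f :: "'b::linorder list \<Rightarrow> 'c::comm_monoid_add"
  assumes "finite S" and S: "\<And>R. R \<in> S \<Longrightarrow> distinct R \<and> Suc t < length R \<and> swap_adj R t \<in> S"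
  shows "(\<Sum>R\<in>S. f R) = (\<Sum>R\<in>{R\<in>S. R ! t < R ! Suc t}. f R + f (swap_adj R t))"
proof -
  let ?asc = "{R\<in>S. R ! t < R ! Suc t}" and ?desc = "{R\<in>S. R ! t > R ! Suc t}"
  have "R ! t \<noteq> R ! Suc t" if "R \<in> S" for R
    using S[OF that] by (simp add: nth_eq_iff_index_eq)
  then have split: "S = ?asc \<union> ?desc" by (auto simp: neq_iff)
  have desc: "?desc = (\<lambda>R. swap_adj R t) ` ?asc"
  proof (intro set_eqI iffI)
    fix R assume "R \<in> ?desc"
    then show "R \<in> (\<lambda>R. swap_adj R t) ` ?asc"
      using S[of R] by (intro image_eqI[where x = "swap_adj R t"]) simp_all
  qed (use S in auto)
  have inj: "inj_on (\<lambda>R. swap_adj R t) ?asc"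
    by (rule inj_onI) (metis (no_types, lifting) S mem_Collect_eq swap_adj_swap_adj)
  have "(\<Sum>R\<in>S. f R) = (\<Sum>R\<in>?asc \<union> ?desc. f R)"
    using split by (rule arg_cong)
  also have "\<dots> = (\<Sum>R\<in>?asc. f R) + (\<Sum>R\<in>?desc. f R)"
    using \<open>finite S\<close> by (intro sum.union_disjoint) auto
  also have "(\<Sum>R\<in>?desc. f R) = (\<Sum>R\<in>?asc. f (swap_adj R t))"
    unfolding desc by (simp add: sum.reindex[OF inj])
  finally show ?thesis by (simp add: sum.distrib)
qed

section \<open>Column determinants as sums over rearrangements\<close>

definition entry_prod :: "(nat \<Rightarrow> nat \<Rightarrow> 'a::monoid_mult) \<Rightarrow> nat list \<Rightarrow> nat list \<Rightarrow> 'a" where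
  "entry_prod X R L = prod_list (map (\<lambda>(a, b). X a b) (zip R L))"

lemma entry_prod_Nil [simp]: "entry_prod X [] L = 1"
  by (simp add: entry_prod_def)

lemma entry_prod_Cons [simp]: "entry_prod X (a # R) (b # L) = X a b * entry_prod X R L"
  by (simp add: entry_prod_def)

lemma entry_prod_append:
  "length R = length L \<Longrightarrow> entry_prod X (R @ R') (L @ L') = entry_prod X R L * entry_prod X R' L'"
  by (simp add: entry_prod_def)

lemma entry_prod_conv_nth:
  "length L = length R \<Longrightarrow> entry_prod X R L = prod_list (map (\<lambda>s. X (R ! s) (L ! s)) [0..<length R])"
  unfolding entry_prod_def by (rule arg_cong[where f = prod_list], rule nth_equalityI) simp_all

lemma entry_prod_split_adj:
  assumes "Suc t < length R" and "length L = length R"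
  shows "entry_prod X R L = entry_prod X (take t R) (take t L)
      * (X (R ! t) (L ! t) * X (R ! Suc t) (L ! Suc t))
      * entry_prod X (drop (Suc (Suc t)) R) (drop (Suc (Suc t)) L)"
proof -
  have "R = take t R @ R ! t # R ! Suc t # drop (Suc (Suc t)) R"
    "L = take t L @ L ! t # L ! Suc t # drop (Suc (Suc t)) L"
    using assms by (metis Cons_nth_drop_Suc Suc_lessD append_take_drop_id)+
  then have "entry_prod X R L = entry_prod X (take t R) (take t L)
      * (X (R ! t) (L ! t) * (X (R ! Suc t) (L ! Suc t)
      * entry_prod X (drop (Suc (Suc t)) R) (drop (Suc (Suc t)) L)))"
    using assms by (metis entry_prod_Cons entry_prod_append length_take)
  then show ?thesis by (simp add: mult.assoc)
qed

definition rearrangements :: "'b list \<Rightarrow> 'b list set" where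
  "rearrangements I = {R. mset R = mset I}"

lemma finite_rearrangements: "finite (rearrangements I)"
proof (rule finite_subset)
  show "rearrangements I \<subseteq> {R. set R \<subseteq> set I \<and> length R = length I}"
    by (auto simp: rearrangements_def dest: mset_eq_setD mset_eq_length)
  show "finite {R. set R \<subseteq> set I \<and> length R = length I}"
    by (rule finite_lists_length_eq) simp
qed

lemma rearrangementsD:
  assumes "R \<in> rearrangements I"
  shows "set R = set I" and "length R = length I" and "distinct R = distinct I"
proof -
  have "mset R = mset I"
    using assms by (simp add: rearrangements_def)
  then show "set R = set I" "length R = length I" "distinct R = distinct I"
    by (rule mset_eq_setD, rule mset_eq_length, rule mset_eq_imp_distinct_iff)
qed

lemma sort_eq_iff_rearrangement:
  fixes K L :: "'b::linorder list"
  assumes "sorted_wrt (<) K"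
  shows "sort L = K \<longleftrightarrow> L \<in> rearrangements K"
proof
  assume "L \<in> rearrangements K"
  then show "sort L = K"
    using assms by (intro properties_for_sort) (simp_all add: rearrangements_def strict_sorted_iff)
qed (auto simp: rearrangements_def)

lemma sum_sorted_rearrangements:
  fixes g :: "'b::linorder list \<Rightarrow> 'c::comm_monoid_add"
  assumes "finite A"
  shows "(\<Sum>K\<in>{K. length K = m \<and> sorted_wrt (<) K \<and> set K \<subseteq> A}. \<Sum>L\<in>rearrangements K. g L)
    = (\<Sum>L\<in>{L. length L = m \<and> distinct L \<and> set L \<subseteq> A}. g L)"
proof -
  let ?Ks = "{K. length K = m \<and> sorted_wrt (<) K \<and> set K \<subseteq> A}"
  have "?Ks \<subseteq> {K. set K \<subseteq> A \<and> length K = m}"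
    by blast
  then have "finite ?Ks"
    using finite_lists_length_eq[OF assms] by (rule finite_subset)
  moreover have "K = K'"
    if "K \<in> ?Ks" "K' \<in> ?Ks" "L \<in> rearrangements K" "L \<in> rearrangements K'" for K K' L
    using that sort_eq_iff_rearrangement[of K L] sort_eq_iff_rearrangement[of K' L] by simp
  then have "\<forall>K\<in>?Ks. \<forall>K'\<in>?Ks. K \<noteq> K' \<longrightarrow> rearrangements K \<inter> rearrangements K' = {}"
    by blast
  ultimately have "(\<Sum>K\<in>?Ks. \<Sum>L\<in>rearrangements K. g L) = (\<Sum>L\<in>(\<Union>K\<in>?Ks. rearrangements K). g L)"
    by (simp add: sum.UNION_disjoint finite_rearrangements)
  also have "(\<Union>K\<in>?Ks. rearrangements K) = {L. length L = m \<and> distinct L \<and> set L \<subseteq> A}"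
  proof (intro set_eqI iffI)
    fix L
    assume "L \<in> (\<Union>K\<in>?Ks. rearrangements K)"
    then obtain K where K: "K \<in> ?Ks" and L: "L \<in> rearrangements K" by blast
    from K have "distinct K" by (simp add: strict_sorted_iff)
    with K rearrangementsD[OF L] show "L \<in> {L. length L = m \<and> distinct L \<and> set L \<subseteq> A}"
      by simp
  next
    fix L
    assume "L \<in> {L. length L = m \<and> distinct L \<and> set L \<subseteq> A}"
    then have "sort L \<in> ?Ks"
      by (simp add: strict_sorted_iff)
    moreover have "L \<in> rearrangements (sort L)"
      by (simp add: rearrangements_def)
    ultimately show "L \<in> (\<Union>K\<in>?Ks. rearrangements K)" by blast
  qed
  finally show ?thesis .
qed

definition cdet_rearr :: "(complex \<Rightarrow> 'a::ring_1) \<Rightarrow> (nat \<Rightarrow> nat \<Rightarrow> complex) \<Rightarrow>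
    (nat \<Rightarrow> nat \<Rightarrow> 'a) \<Rightarrow> nat list \<Rightarrow> nat list \<Rightarrow> 'a" where
  "cdet_rearr phi q X I L = (\<Sum>R\<in>rearrangements I. phi (eps q R) * entry_prod X R L)"

lemma bij_betw_permute_list_rearrangements:
  assumes "distinct I"
  shows "bij_betw (\<lambda>\<sigma>. permute_list \<sigma> I) {\<sigma>. \<sigma> permutes {..<length I}} (rearrangements I)"
proof (rule bij_betw_imageI)
  show "inj_on (\<lambda>\<sigma>. permute_list \<sigma> I) {\<sigma>. \<sigma> permutes {..<length I}}"
  proof (rule inj_onI, rule ext)
    fix \<sigma> \<tau> x
    assume "\<sigma> \<in> {\<sigma>. \<sigma> permutes {..<length I}}" "\<tau> \<in> {\<sigma>. \<sigma> permutes {..<length I}}"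
      and eq: "permute_list \<sigma> I = permute_list \<tau> I"
    then have \<sigma>: "\<sigma> permutes {..<length I}" and \<tau>: "\<tau> permutes {..<length I}" by simp_all
    show "\<sigma> x = \<tau> x"
    proof (cases "x < length I")
      case True
      then have "I ! \<sigma> x = I ! \<tau> x"
        using arg_cong[OF eq, of "\<lambda>R. R ! x"] \<sigma> \<tau> by (simp add: permute_list_nth)
      moreover have "\<sigma> x < length I" "\<tau> x < length I"
        using True permutes_in_image[OF \<sigma>] permutes_in_image[OF \<tau>] by simp_all
      ultimately show ?thesis
        using assms nth_eq_iff_index_eq by blast
    qed (use \<sigma> \<tau> in \<open>simp add: permutes_not_in\<close>)
  qed
  show "(\<lambda>\<sigma>. permute_list \<sigma> I) ` {\<sigma>. \<sigma> permutes {..<length I}} = rearrangements I"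
  proof (intro set_eqI iffI)
    fix R
    assume "R \<in> rearrangements I"
    then have "mset R = mset I" by (simp add: rearrangements_def)
    then obtain \<sigma> where "\<sigma> permutes {..<length I}" "permute_list \<sigma> I = R"
      by (rule mset_eq_permutation)
    then show "R \<in> (\<lambda>\<sigma>. permute_list \<sigma> I) ` {\<sigma>. \<sigma> permutes {..<length I}}" by blast
  qed (auto simp: rearrangements_def)
qed

lemma sorted_wrt_less_nth_less_iff:
  assumes "sorted_wrt (<) (I :: 'b::linorder list)" and "a < length I" and "b < length I"
  shows "I ! a < I ! b \<longleftrightarrow> a < b"
  using assms by (metis linorder_neqE_nat not_less_iff_gr_or_eq sorted_wrt_nth_less)

lemma eps_perm_eq_eps_permute_list:
  assumes I: "sorted_wrt (<) I" and \<sigma>: "\<sigma> permutes {..<length I}"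
  shows "eps_perm q I \<sigma> = eps q (permute_list \<sigma> I)"
proof -
  have "I ! \<sigma> s > I ! \<sigma> u \<longleftrightarrow> \<sigma> s > \<sigma> u" if "s < length I" "u < length I" for s u
    using that permutes_in_image[OF \<sigma>] I by (simp add: sorted_wrt_less_nth_less_iff)
  then have "inversions (permute_list \<sigma> I) = {(s, u). s < u \<and> u < length I \<and> \<sigma> s > \<sigma> u}"
    using \<sigma> by (auto simp: inversions_def permute_list_nth)
  then show ?thesis
    using I \<sigma> by (auto simp: eps_eq_prod_inversions eps_perm_def permute_list_nth strict_sorted_iff
        intro!: prod.cong)
qed

lemma cdet_eq_cdet_rearr:
  assumes I: "sorted_wrt (<) I" and "length L = length I"
  shows "cdet phi q X I L = cdet_rearr phi q X I L"
proof -
  have "phi (eps_perm q I \<sigma>) * prod_list (map (\<lambda>s. X (I ! \<sigma> s) (L ! s)) [0..<length I])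
      = phi (eps q (permute_list \<sigma> I)) * entry_prod X (permute_list \<sigma> I) L"
    if \<sigma>: "\<sigma> permutes {..<length I}" for \<sigma>
  proof -
    have "entry_prod X (permute_list \<sigma> I) L = prod_list (map (\<lambda>s. X (I ! \<sigma> s) (L ! s)) [0..<length I])"
      using assms(2) by (auto simp: entry_prod_conv_nth permute_list_nth[OF \<sigma>]
          intro!: arg_cong[where f = prod_list] map_cong)
    then show ?thesis
      using eps_perm_eq_eps_permute_list[OF I \<sigma>] by simp
  qed
  then have "cdet phi q X I L
      = (\<Sum>\<sigma>\<in>{\<sigma>. \<sigma> permutes {..<length I}}. phi (eps q (permute_list \<sigma> I)) * entry_prod X (permute_list \<sigma> I) L)"
    unfolding cdet_def atLeast0LessThan by (intro sum.cong) auto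
  also have "\<dots> = cdet_rearr phi q X I L"
    unfolding cdet_rearr_def
    by (rule sum.reindex_bij_betw[OF bij_betw_permute_list_rearrangements])
      (use I in \<open>simp add: strict_sorted_iff\<close>)
  finally show ?thesis .
qed

section \<open>Column operations on Manin matrices\<close>

text \<open>The column determinant \<open>cdet\<^sub>q\<close> of the \<open>2 \<times> 2\<close> submatrix with rows \<open>i < j\<close> and
  columns \<open>k, l\<close>.\<close>

definition qminor :: "(complex \<Rightarrow> 'a::ring_1) \<Rightarrow> (nat \<Rightarrow> nat \<Rightarrow> complex) \<Rightarrow> (nat \<Rightarrow> nat \<Rightarrow> 'a) \<Rightarrow>
    nat \<Rightarrow> nat \<Rightarrow> nat \<Rightarrow> nat \<Rightarrow> 'a" where
  "qminor phi q X i j k l = X i k * X j l - phi (q j i) * (X j k * X i l)"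

lemma manin_qminor_same_col:
  assumes "manin phi n q p M" and "i < j" and "i \<in> {1..n}" "j \<in> {1..n}" "k \<in> {1..n}"
  shows "qminor phi q M i j k k = 0"
  using assms unfolding manin_def qminor_def by (simp add: mult.assoc)

lemma manin_qminor_swap_ordered:
  assumes phi: "calg phi" and "manin phi n q p M" and "i < j" and "k < l"
    and "i \<in> {1..n}" "j \<in> {1..n}" "k \<in> {1..n}" "l \<in> {1..n}"
  shows "qminor phi q M i j k l = phi (- p k l) * qminor phi q M i j l k"
proof -
  have "M i k * M j l - phi (q j i * p k l) * M j l * M i k + phi (p k l) * M i l * M j k
      - phi (q j i) * M j k * M i l = 0"
    using assms unfolding manin_def by blast
  moreover have "phi (q j i * p k l) = phi (p k l) * phi (q j i)"
    using calg_mult[OF phi, of "p k l" "q j i"] by (simp add: mult.commute)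
  ultimately show ?thesis
    unfolding qminor_def calg_minus[OF phi] by (simp add: algebra_simps eq_neg_iff_add_eq_0)
qed

lemma manin_qminor_swap:
  assumes phi: "calg phi" and M: "manin phi n q p M" and p: "param_matrix n p" and "i < j"
    and ij: "i \<in> {1..n}" "j \<in> {1..n}" and kl: "k \<in> {1..n}" "l \<in> {1..n}" and "k \<noteq> l"
  shows "qminor phi q M i j k l = phi (- p k l) * qminor phi q M i j l k"
proof (cases "k < l")
  case True
  then show ?thesis using manin_qminor_swap_ordered[OF phi M \<open>i < j\<close> _ ij kl] by blast
next
  case False
  then have "qminor phi q M i j l k = phi (- p l k) * qminor phi q M i j k l"
    using manin_qminor_swap_ordered[OF phi M \<open>i < j\<close> _ ij kl(2,1)] \<open>k \<noteq> l\<close> by simp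
  moreover have "phi (- p k l) * phi (- p l k) = 1"
    using param_matrix_minus_mult[OF p kl] by (simp add: calg_mult[OF phi, symmetric] calg_one[OF phi])
  ultimately show ?thesis by (simp add: mult.assoc[symmetric])
qed

text \<open>Pairing each rearrangement with its swap at positions \<open>t, t+1\<close> collects the
  contributions of the columns \<open>t, t+1\<close> into \<open>2 \<times> 2\<close> minors.\<close>

lemma cdet_rearr_adj_cols:
  assumes phi: "calg phi" and "distinct I" and t: "Suc t < length I" and L: "length L = length I"
  shows "cdet_rearr phi q X I L = (\<Sum>R\<in>{R\<in>rearrangements I. R ! t < R ! Suc t}.
      phi (eps q R) * (entry_prod X (take t R) (take t L)
        * qminor phi q X (R ! t) (R ! Suc t) (L ! t) (L ! Suc t)
        * entry_prod X (drop (Suc (Suc t)) R) (drop (Suc (Suc t)) L)))"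
proof -
  have "cdet_rearr phi q X I L = (\<Sum>R\<in>{R\<in>rearrangements I. R ! t < R ! Suc t}.
      phi (eps q R) * entry_prod X R L + phi (eps q (swap_adj R t)) * entry_prod X (swap_adj R t) L)"
    unfolding cdet_rearr_def
  proof (rule sum_swap_adj_pairs[OF finite_rearrangements])
    fix R
    assume R: "R \<in> rearrangements I"
    then show "distinct R \<and> Suc t < length R \<and> swap_adj R t \<in> rearrangements I"
      using assms rearrangementsD[OF R] by (simp add: rearrangements_def)
  qed
  also have "\<dots> = (\<Sum>R\<in>{R\<in>rearrangements I. R ! t < R ! Suc t}.
      phi (eps q R) * (entry_prod X (take t R) (take t L)
        * qminor phi q X (R ! t) (R ! Suc t) (L ! t) (L ! Suc t)
        * entry_prod X (drop (Suc (Suc t)) R) (drop (Suc (Suc t)) L)))"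
  proof (rule sum.cong[OF refl])
    fix R
    assume R: "R \<in> {R\<in>rearrangements I. R ! t < R ! Suc t}"
    then have tR: "Suc t < length R" and LR: "length L = length R"
      using t L rearrangementsD(2)[of R I] by simp_all
    have eps_swap: "phi (eps q (swap_adj R t)) = - (phi (q (R ! Suc t) (R ! t)) * phi (eps q R))"
      using eps_swap_adj_asc[OF tR, of q] R
      by (simp add: calg_mult[OF phi] calg_minus[OF phi])
    have prod_swap: "entry_prod X (swap_adj R t) L = entry_prod X (take t R) (take t L)
        * (X (R ! Suc t) (L ! t) * X (R ! t) (L ! Suc t))
        * entry_prod X (drop (Suc (Suc t)) R) (drop (Suc (Suc t)) L)"
      using entry_prod_split_adj[of t "swap_adj R t" L X] tR LR by simp
    show "phi (eps q R) * entry_prod X R L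
        + phi (eps q (swap_adj R t)) * entry_prod X (swap_adj R t) L
      = phi (eps q R) * (entry_prod X (take t R) (take t L)
        * qminor phi q X (R ! t) (R ! Suc t) (L ! t) (L ! Suc t)
        * entry_prod X (drop (Suc (Suc t)) R) (drop (Suc (Suc t)) L))"
      unfolding eps_swap prod_swap entry_prod_split_adj[OF tR LR, of X] qminor_def
      by (rule mult_diff_central_factor) (rule calg_central[OF phi])
  qed
  finally show ?thesis .
qed

lemma nth_rearrangement_mem:
  "R \<in> rearrangements I \<Longrightarrow> set I \<subseteq> A \<Longrightarrow> i < length I \<Longrightarrow> R ! i \<in> A"
  using rearrangementsD(1,2) by (metis nth_mem subsetD)

lemma cdet_rearr_swap_cols:
  assumes phi: "calg phi" and M: "manin phi n q p M" and p: "param_matrix n p"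
    and I: "distinct I" "set I \<subseteq> {1..n}" and L: "set L \<subseteq> {1..n}" "length L = length I"
    and t: "Suc t < length L" and "L ! t \<noteq> L ! Suc t"
  shows "cdet_rearr phi q M I L = phi (- p (L ! t) (L ! Suc t)) * cdet_rearr phi q M I (swap_adj L t)"
proof -
  let ?c = "phi (- p (L ! t) (L ! Suc t))"
  let ?pre = "\<lambda>R. entry_prod M (take t R) (take t L)"
    and ?post = "\<lambda>R. entry_prod M (drop (Suc (Suc t)) R) (drop (Suc (Suc t)) L)"
  have Lt: "L ! t \<in> {1..n}" "L ! Suc t \<in> {1..n}"
    using L t by (meson nth_mem subsetD Suc_lessD)+
  have "cdet_rearr phi q M I L = (\<Sum>R\<in>{R\<in>rearrangements I. R ! t < R ! Suc t}.
      phi (eps q R) * (?pre R * qminor phi q M (R ! t) (R ! Suc t) (L ! t) (L ! Suc t) * ?post R))"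
    using cdet_rearr_adj_cols[OF phi I(1)] t L by simp
  also have "\<dots> = (\<Sum>R\<in>{R\<in>rearrangements I. R ! t < R ! Suc t}.
      ?c * (phi (eps q R) * (?pre R * qminor phi q M (R ! t) (R ! Suc t) (L ! Suc t) (L ! t) * ?post R)))"
  proof (rule sum.cong[OF refl])
    fix R
    assume R: "R \<in> {R\<in>rearrangements I. R ! t < R ! Suc t}"
    then have R': "R \<in> rearrangements I" by simp
    have "R ! t \<in> {1..n}" "R ! Suc t \<in> {1..n}"
      by (rule nth_rearrangement_mem[OF R' I(2)], use t L in simp)+
    with R have Q: "qminor phi q M (R ! t) (R ! Suc t) (L ! t) (L ! Suc t)
        = ?c * qminor phi q M (R ! t) (R ! Suc t) (L ! Suc t) (L ! t)"
      using \<open>L ! t \<noteq> L ! Suc t\<close> by (intro manin_qminor_swap[OF phi M p _ _ _ Lt]) simp_all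
    show "phi (eps q R) * (?pre R * qminor phi q M (R ! t) (R ! Suc t) (L ! t) (L ! Suc t) * ?post R)
      = ?c * (phi (eps q R) * (?pre R * qminor phi q M (R ! t) (R ! Suc t) (L ! Suc t) (L ! t) * ?post R))"
      unfolding Q by (rule mult_central_pull_out) (rule calg_central[OF phi])
  qed
  also have "\<dots> = ?c * cdet_rearr phi q M I (swap_adj L t)"
    using cdet_rearr_adj_cols[OF phi I(1), of t "swap_adj L t" q M] t L
    by (simp add: sum_distrib_left)
  finally show ?thesis .
qed

lemma cdet_rearr_repeated_col:
  assumes phi: "calg phi" and M: "manin phi n q p M"
    and I: "distinct I" "set I \<subseteq> {1..n}" and L: "set L \<subseteq> {1..n}" "length L = length I"
    and t: "Suc t < length L" and "L ! t = L ! Suc t"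
  shows "cdet_rearr phi q M I L = 0"
proof -
  have "qminor phi q M (R ! t) (R ! Suc t) (L ! t) (L ! Suc t) = 0"
    if R: "R \<in> {R\<in>rearrangements I. R ! t < R ! Suc t}" for R
  proof -
    from R have R': "R \<in> rearrangements I" by simp
    have "R ! t \<in> {1..n}" "R ! Suc t \<in> {1..n}"
      by (rule nth_rearrangement_mem[OF R' I(2)], use t L in simp)+
    moreover have "L ! t \<in> {1..n}"
      using L t by (meson nth_mem subsetD Suc_lessD)
    ultimately show ?thesis
      using R \<open>L ! t = L ! Suc t\<close> manin_qminor_same_col[OF M] by simp
  qed
  then show ?thesis
    using cdet_rearr_adj_cols[OF phi I(1), of t L q M] t L by simp
qed

lemma sorted_not_distinct_adj_eq:
  fixes L :: "'b::linorder list"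
  assumes "sorted L" and "\<not> distinct L"
  obtains t where "Suc t < length L" and "L ! t = L ! Suc t"
proof -
  have "\<not> sorted_wrt (<) L"
    using assms(2) strict_sorted_iff by blast
  then have "\<not> (\<forall>t. Suc t < length L \<longrightarrow> L ! t < L ! Suc t)"
    by (simp add: sorted_wrt_iff_nth_Suc_transp)
  then obtain t where "Suc t < length L" "\<not> L ! t < L ! Suc t"
    by blast
  moreover have "L ! t \<le> L ! Suc t"
    using assms(1) calculation(1) by (simp add: sorted_iff_nth_Suc)
  ultimately show ?thesis
    using that by simp
qed

text \<open>For \<open>L\<close> with repeated entries both sides vanish, as \<open>eps p L = 0\<close>.\<close>

lemma cdet_rearr_sort_cols:
  assumes phi: "calg phi" and M: "manin phi n q p M" and p: "param_matrix n p"
    and I: "distinct I" "set I \<subseteq> {1..n}"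
  shows "set L \<subseteq> {1..n} \<Longrightarrow> length L = length I \<Longrightarrow>
    cdet_rearr phi q M I L = phi (eps p L) * cdet_rearr phi q M I (sort L)"
proof (induction L rule: sort_adj_induct)
  case (sorted L)
  show ?case
  proof (cases "distinct L")
    case True
    then show ?thesis using sorted by (simp add: sorted_sort_id eps_sorted calg_one[OF phi])
  next
    case False
    then obtain t where "Suc t < length L" "L ! t = L ! Suc t"
      using sorted_not_distinct_adj_eq sorted(1) by blast
    then have "cdet_rearr phi q M I L = 0"
      using cdet_rearr_repeated_col[OF phi M I] sorted by blast
    then show ?thesis
      using False by (simp add: eps_def calg_zero[OF phi])
  qed
next
  case (swap L t)
  have IH: "cdet_rearr phi q M I (swap_adj L t) = phi (eps p (swap_adj L t)) * cdet_rearr phi q M I (sort L)"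
    using swap by simp
  have "cdet_rearr phi q M I L = phi (- p (L ! t) (L ! Suc t)) * cdet_rearr phi q M I (swap_adj L t)"
    by (rule cdet_rearr_swap_cols[OF phi M p I]) (use swap in simp_all)
  also have "\<dots> = phi (- p (L ! t) (L ! Suc t) * eps p (swap_adj L t)) * cdet_rearr phi q M I (sort L)"
    unfolding IH calg_mult[OF phi] by (simp only: mult.assoc)
  also have "- p (L ! t) (L ! Suc t) * eps p (swap_adj L t) = eps p L"
    using eps_swap_adj_desc[OF swap.hyps(1,2)] by simp
  finally show ?case .
qed

section \<open>Contraction with the inverse matrix\<close>

lemma entry_prod_snoc:
  "length R = length L \<Longrightarrow> entry_prod X (R @ [a]) (L @ [b]) = entry_prod X R L * X a b"
  by (simp add: entry_prod_append)

text \<open>The product \<open>M(r\<^sub>m, l\<^sub>m) \<cdots> M(r\<^sub>1, l\<^sub>1) N(l\<^sub>1, j\<^sub>1) \<cdots> N(l\<^sub>m, j\<^sub>m)\<close> is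
  contracted from the middle outwards, one summation index \<open>l\<^sub>k\<close> at a time.\<close>

lemma sum_entry_prod_right_inverse:
  fixes M N :: "nat \<Rightarrow> nat \<Rightarrow> 'a::ring_1"
  assumes inv: "\<And>i j. i \<in> {1..n} \<Longrightarrow> j \<in> {1..n} \<Longrightarrow> matmul n M N i j = (if i = j then 1 else 0)"
  shows "length R = m \<Longrightarrow> length J = m \<Longrightarrow> set R \<subseteq> {1..n} \<Longrightarrow> set J \<subseteq> {1..n} \<Longrightarrow>
    (\<Sum>L\<in>{L. set L \<subseteq> {1..n} \<and> length L = m}. entry_prod M (rev R) (rev L) * entry_prod N L J)
      = (if R = J then 1 else 0)"
proof (induction m arbitrary: R J)
  case 0
  moreover have "{L. set L \<subseteq> {1..n} \<and> length L = 0} = {[]}"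
    by auto
  ultimately show ?case by simp
next
  case (Suc m)
  obtain r R' j J' where R: "R = r # R'" and J: "J = j # J'"
    using Suc.prems(1,2) by (cases R; cases J) auto
  let ?Ls = "{L. set L \<subseteq> {1..n} \<and> length L = m}"
  have "(\<Sum>L\<in>{L. set L \<subseteq> {1..n} \<and> length L = Suc m}. entry_prod M (rev R) (rev L) * entry_prod N L J)
      = (\<Sum>(L, x)\<in>?Ls \<times> {1..n}. entry_prod M (rev R) (rev (x # L)) * entry_prod N (x # L) J)"
    unfolding lists_length_Suc_eq
    by (subst sum.reindex) (auto intro: inj_onI simp: case_prod_beta)
  also have "\<dots> = (\<Sum>L\<in>?Ls. entry_prod M (rev R') (rev L) * matmul n M N r j * entry_prod N L J')"
    unfolding sum.cartesian_product[symmetric] matmul_def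
    using Suc.prems(1) R J
    by (intro sum.cong refl) (simp add: entry_prod_snoc sum_distrib_left sum_distrib_right mult.assoc)
  also have "\<dots> = (if r = j then 1 else 0) * (\<Sum>L\<in>?Ls. entry_prod M (rev R') (rev L) * entry_prod N L J')"
    using inv[of r j] Suc.prems(3,4) R J by (simp add: sum_distrib_left)
  also have "\<dots> = (if R = J then 1 else 0)"
    using Suc.IH[of R' J'] Suc.prems R J by simp
  finally show ?case .
qed

lemma sum_cdet_rearr_right_inverse:
  fixes M N :: "nat \<Rightarrow> nat \<Rightarrow> 'a::ring_1"
  assumes inv: "\<And>i j. i \<in> {1..n} \<Longrightarrow> j \<in> {1..n} \<Longrightarrow> matmul n M N i j = (if i = j then 1 else 0)"
    and I: "length I = m" "set I \<subseteq> {1..n}" and J: "length J = m" "set J \<subseteq> {1..n}"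
  shows "(\<Sum>L\<in>{L. set L \<subseteq> {1..n} \<and> length L = m}. cdet_rearr phi q M I (rev L) * entry_prod N L J)
    = (if mset J = mset I then phi (eps q (rev J)) else 0)"
proof -
  let ?Ls = "{L. set L \<subseteq> {1..n} \<and> length L = m}"
  have "(\<Sum>L\<in>?Ls. cdet_rearr phi q M I (rev L) * entry_prod N L J)
      = (\<Sum>L\<in>?Ls. \<Sum>R\<in>rearrangements I. phi (eps q R) * (entry_prod M R (rev L) * entry_prod N L J))"
    unfolding cdet_rearr_def by (simp add: sum_distrib_right mult.assoc)
  also have "\<dots> = (\<Sum>R\<in>rearrangements I. phi (eps q R) * (\<Sum>L\<in>?Ls. entry_prod M R (rev L) * entry_prod N L J))"
    by (subst sum.swap) (simp add: sum_distrib_left)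
  also have "\<dots> = (\<Sum>R\<in>rearrangements I. if R = rev J then phi (eps q R) else 0)"
  proof (rule sum.cong[OF refl])
    fix R
    assume "R \<in> rearrangements I"
    then have "length (rev R) = m" "set (rev R) \<subseteq> {1..n}"
      using I rearrangementsD[of R I] by simp_all
    then show "phi (eps q R) * (\<Sum>L\<in>?Ls. entry_prod M R (rev L) * entry_prod N L J)
        = (if R = rev J then phi (eps q R) else 0)"
      using sum_entry_prod_right_inverse[OF inv _ J(1) _ J(2), of "rev R"] by auto
  qed
  also have "\<dots> = (if mset J = mset I then phi (eps q (rev J)) else 0)"
    unfolding sum.delta[OF finite_rearrangements] by (simp add: rearrangements_def)
  finally show ?thesis .
qed

section \<open>Minors of a Manin matrix and of its inverse\<close>

lemma cdet_mult_cdet_eq_sum_rearrangements: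
  assumes phi: "calg phi" and M: "manin phi n q p M" and p: "param_matrix n p"
    and I: "sorted_wrt (<) I" "set I \<subseteq> {1..n}"
    and K: "sorted_wrt (<) K" "set K \<subseteq> {1..n}" "length K = length I" and J: "length J = length K"
  shows "phi (eps p (rev K)) * cdet phi q M I K * cdet phi (\<lambda>i j. inverse (p i j)) N K J
    = (\<Sum>L\<in>rearrangements K. cdet_rearr phi q M I (rev L) * entry_prod N L J)"
proof -
  let ?p' = "\<lambda>i j. inverse (p i j)"
  have "phi (eps p (rev K)) * cdet phi q M I K * cdet phi ?p' N K J
      = (\<Sum>L\<in>rearrangements K.
          phi (eps p (rev K)) * cdet_rearr phi q M I K * (phi (eps ?p' L) * entry_prod N L J))"
    using I K J by (simp add: cdet_eq_cdet_rearr cdet_rearr_def[of phi ?p'] sum_distrib_left)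
  also have "\<dots> = (\<Sum>L\<in>rearrangements K. cdet_rearr phi q M I (rev L) * entry_prod N L J)"
  proof (rule sum.cong[OF refl])
    fix L
    assume L: "L \<in> rearrangements K"
    then have "rev L \<in> rearrangements K"
      by (simp add: rearrangements_def)
    then have sorts: "sort L = K" "sort (rev L) = K"
      using L sort_eq_iff_rearrangement[OF K(1)] by blast+
    have L_props: "distinct L" "set L \<subseteq> {1..n}" "length L = length I"
      using rearrangementsD[OF L] K by (simp_all add: strict_sorted_iff)
    have eps_L: "phi (eps p (rev L)) = phi (eps p (rev K)) * phi (eps ?p' L)"
      using eps_rev_eq[OF p L_props(1,2)] sorts(1) by (simp add: calg_mult[OF phi])
    have cdet_L: "cdet_rearr phi q M I (rev L) = phi (eps p (rev L)) * cdet_rearr phi q M I K"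
      using cdet_rearr_sort_cols[OF phi M p, of I "rev L"] I L_props sorts(2)
      by (simp add: strict_sorted_iff)
    have "phi (eps p (rev K)) * cdet_rearr phi q M I K * (phi (eps ?p' L) * entry_prod N L J)
        = phi (eps p (rev K)) * (cdet_rearr phi q M I K * phi (eps ?p' L)) * entry_prod N L J"
      by (simp add: mult.assoc)
    also have "cdet_rearr phi q M I K * phi (eps ?p' L) = phi (eps ?p' L) * cdet_rearr phi q M I K"
      by (rule calg_central[OF phi, symmetric])
    finally show "phi (eps p (rev K)) * cdet_rearr phi q M I K * (phi (eps ?p' L) * entry_prod N L J)
        = cdet_rearr phi q M I (rev L) * entry_prod N L J"
      unfolding cdet_L eps_L by (simp add: mult.assoc)
  qed
  finally show ?thesis .
qed

lemma sum_sorted_cdet_mult_cdet: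
  assumes phi: "calg phi" and M: "manin phi n q p M" and p: "param_matrix n p"
    and inv: "is_inverse n M N"
    and I: "length I = m" "sorted_wrt (<) I" "set I \<subseteq> {1..n}" and J: "length J = m" "set J \<subseteq> {1..n}"
  shows "(\<Sum>K\<in>{K. length K = m \<and> sorted_wrt (<) K \<and> set K \<subseteq> {1..n}}.
      phi (eps p (rev K)) * cdet phi q M I K * cdet phi (\<lambda>i j. inverse (p i j)) N K J)
    = phi (eps q (rev J)) * (if I = sort J then 1 else 0)"
proof -
  let ?g = "\<lambda>L. cdet_rearr phi q M I (rev L) * entry_prod N L J"
  have "(\<Sum>K\<in>{K. length K = m \<and> sorted_wrt (<) K \<and> set K \<subseteq> {1..n}}.
      phi (eps p (rev K)) * cdet phi q M I K * cdet phi (\<lambda>i j. inverse (p i j)) N K J)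
    = (\<Sum>K\<in>{K. length K = m \<and> sorted_wrt (<) K \<and> set K \<subseteq> {1..n}}. \<Sum>L\<in>rearrangements K. ?g L)"
    using I J by (intro sum.cong refl cdet_mult_cdet_eq_sum_rearrangements[OF phi M p]) auto
  also have "\<dots> = (\<Sum>L\<in>{L. length L = m \<and> distinct L \<and> set L \<subseteq> {1..n}}. ?g L)"
    by (rule sum_sorted_rearrangements) simp
  also have "\<dots> = (\<Sum>L\<in>{L. set L \<subseteq> {1..n} \<and> length L = m}. ?g L)"
  proof (rule sum.mono_neutral_left)
    show "finite {L. set L \<subseteq> {1..n} \<and> length L = m}"
      by (rule finite_lists_length_eq) simp
    show "\<forall>L\<in>{L. set L \<subseteq> {1..n} \<and> length L = m} - {L. length L = m \<and> distinct L \<and> set L \<subseteq> {1..n}}.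
        ?g L = 0"
    proof
      fix L
      assume L: "L \<in> {L. set L \<subseteq> {1..n} \<and> length L = m} - {L. length L = m \<and> distinct L \<and> set L \<subseteq> {1..n}}"
      then have "cdet_rearr phi q M I (rev L) = phi (eps p (rev L)) * cdet_rearr phi q M I (sort (rev L))"
        using cdet_rearr_sort_cols[OF phi M p, of I "rev L"] I by (simp add: strict_sorted_iff)
      also have "eps p (rev L) = 0"
        using L by (auto simp: eps_def)
      finally show "?g L = 0"
        by (simp add: calg_zero[OF phi])
    qed
  qed auto
  also have "\<dots> = (if mset J = mset I then phi (eps q (rev J)) else 0)"
    using inv I J by (intro sum_cdet_rearr_right_inverse) (auto simp: is_inverse_def)
  also have "\<dots> = phi (eps q (rev J)) * (if I = sort J then 1 else 0)"
    using sort_eq_iff_rearrangement[OF I(2), of J] by (auto simp: rearrangements_def)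
  finally show ?thesis .
qed

lemma sorted_lists_full_range:
  "{K. length K = n \<and> sorted_wrt (<) K \<and> set K \<subseteq> {1..n}} = {[1..<n+1]}"
proof (intro set_eqI iffI)
  fix K
  assume "K \<in> {K. length K = n \<and> sorted_wrt (<) K \<and> set K \<subseteq> {1..n}}"
  then have K: "length K = n" "sorted K" "distinct K" "set K \<subseteq> {1..n}"
    by (auto simp: strict_sorted_iff)
  then have "set K = {1..n}"
    by (intro card_subset_eq) (simp_all add: distinct_card)
  also have "{1..n} = set [1..<n+1]"
    by (simp only: set_upt Suc_eq_plus1[symmetric] atLeastLessThanSuc_atLeastAtMost)
  finally have "set K = set [1..<n+1]" .
  then have "K = [1..<n+1]"
    by (rule sorted_distinct_set_unique[OF K(2,3) sorted_upt distinct_upt])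
  then show "K \<in> {[1..<n+1]}"
    by (simp only: singleton_iff)
qed (simp add: strict_sorted_iff atLeastLessThanSuc_atLeastAtMost del: upt_Suc)

lemma cdet_mult_cdet_inverse:
  assumes phi: "calg phi" and M: "manin phi n q p M" and p: "param_matrix n p"
    and inv: "is_inverse n M N"
  shows "cdet phi q M [1..<n+1] [1..<n+1] * cdet phi (\<lambda>i j. inverse (p i j)) N [1..<n+1] [1..<n+1]
    = phi (inverse (eps p (rev [1..<n+1])) * eps q (rev [1..<n+1]))"
proof -
  let ?K = "[1..<n+1]"
  have "?K \<in> {K. length K = n \<and> sorted_wrt (<) K \<and> set K \<subseteq> {1..n}}"
    unfolding sorted_lists_full_range by (rule singletonI)
  then have K: "length ?K = n" "sorted_wrt (<) ?K" "set ?K \<subseteq> {1..n}"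
    unfolding mem_Collect_eq by blast+
  have "sort ?K = ?K"
    by (rule sorted_sort_id[OF sorted_upt])
  then have "phi (eps p (rev ?K)) * (cdet phi q M ?K ?K * cdet phi (\<lambda>i j. inverse (p i j)) N ?K ?K)
      = phi (eps q (rev ?K))"
    using sum_sorted_cdet_mult_cdet[OF phi M p inv K K(1,3)]
    unfolding sorted_lists_full_range by (simp add: mult.assoc del: upt_Suc)
  moreover have "eps p (rev ?K) \<noteq> 0"
    by (rule eps_nonzero[OF p]) (use K(2,3) in \<open>simp_all add: strict_sorted_iff del: upt_Suc\<close>)
  ultimately show ?thesis
    unfolding calg_mult[OF phi] by (rule calg_mult_left_cancel[OF phi, rotated])
qed

theorem mainTheorem6:
  fixes phi :: "complex \<Rightarrow> 'a::ring_1"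
    and n m :: nat
    and q p :: "nat \<Rightarrow> nat \<Rightarrow> complex"
    and M Minv :: "nat \<Rightarrow> nat \<Rightarrow> 'a"
    and I J :: "nat list"
  assumes "calg phi"
    and "param_matrix n q" and "param_matrix n p"
    and "manin phi n q p M"
    and "is_inverse n M Minv"
    and "1 \<le> m" and "m \<le> n"
    and "length I = m" and "sorted_wrt (<) I" and "set I \<subseteq> {1..n}"
    and "length J = m" and "distinct J" and "set J \<subseteq> {1..n}"
  shows "((\<Sum>K\<in>{K. length K = m \<and> sorted_wrt (<) K \<and> set K \<subseteq> {1..n}}.
            phi (eps p (rev K)) * cdet phi q M I K
              * cdet phi (\<lambda>i j. inverse (p i j)) Minv K J)
         = phi (eps q (rev J)) * (if I = sort J then 1 else 0))
       \<and> (cdet phi q M [1..<n+1] [1..<n+1] * cdet phi (\<lambda>i j. inverse (p i j)) Minv [1..<n+1] [1..<n+1]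
         = phi (inverse (eps p (rev [1..<n+1])) * eps q (rev [1..<n+1])))"
proof -
  show ?thesis
    using sum_sorted_cdet_mult_cdet[OF assms(1,4,3,5,8-11,13)] cdet_mult_cdet_inverse[OF assms(1,4,3,5)]
    by (rule conjI)
qed

end
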